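(* Let $k$ be a field of characteristic zero, let $n\ge 1$, and let $R$ denote either $k[x_1,\ldots,x_n]$ or $k[[x_1,\ldots,x_n]]$. Let $\mathfrak{D}$ be a set of pairwise commuting $k$-derivations of $R$ such that $R$ is $\mathfrak{D}$-simple and $\partial_{x_1},\ldots,\partial_{x_{n-1}}\in\mathfrak{D}$. Then there exist $d\in\mathfrak{D}$ and elements $f_1,\ldots,f_n\in R$ such that $d(f_n)=1$ and $d(f_i)=0$ for all $i=1,\ldots,n-1$, and such that $R$ is $\{\partial_{x_1},\ldots,\partial_{x_{n-1}},d\}$-simple.
   Context: A $k$-derivation of $R$ is a $k$-linear map satisfying the Leibniz rule. For a family $\mathfrak{D}$ of $k$-derivations, an ideal $I$ is $\mathfrak{D}$-stable if $d(I)\subseteq I$ for all $d\in\mathfrak{D}$, and $R$ is $\mathfrak{D}$-simple if $0$ and $R$ are its only $\mathfrak{D}$-stable ideals. *)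

theory Defs
  imports Main
begin

text \<open>Elements of k[x_1..x_n] and k[[x_1..x_n]] are represented as coefficient
functions on exponent vectors (nat => nat). Variable x_(i+1) has index i,
so x_1..x_n correspond to indices 0..n-1.\<close>

type_synonym 'k ser = "(nat \<Rightarrow> nat) \<Rightarrow> 'k"

definition exps :: "nat \<Rightarrow> (nat \<Rightarrow> nat) set" where
  "exps n = {\<alpha>. \<forall>i\<ge>n. \<alpha> i = 0}"

definition ps_carrier :: "nat \<Rightarrow> ('k::zero) ser set" where
  "ps_carrier n = {f. \<forall>\<alpha>. \<alpha> \<notin> exps n \<longrightarrow> f \<alpha> = 0}"

definition poly_carrier :: "nat \<Rightarrow> ('k::zero) ser set" where
  "poly_carrier n = {f \<in> ps_carrier n. finite {\<alpha>. f \<alpha> \<noteq> 0}}"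

definition s_zero :: "('k::zero) ser" where
  "s_zero = (\<lambda>\<alpha>. 0)"

definition s_add :: "('k::plus) ser \<Rightarrow> 'k ser \<Rightarrow> 'k ser" where
  "s_add f g = (\<lambda>\<alpha>. f \<alpha> + g \<alpha>)"

definition s_smult :: "'k::times \<Rightarrow> 'k ser \<Rightarrow> 'k ser" where
  "s_smult c f = (\<lambda>\<alpha>. c * f \<alpha>)"

definition s_mul :: "('k::comm_semiring_0) ser \<Rightarrow> 'k ser \<Rightarrow> 'k ser" where
  "s_mul f g = (\<lambda>\<alpha>. \<Sum>\<beta>\<in>{\<beta>. \<forall>i. \<beta> i \<le> \<alpha> i}. f \<beta> * g (\<lambda>i. \<alpha> i - \<beta> i))"

definition s_one :: "('k::{zero,one}) ser" where
  "s_one = (\<lambda>\<alpha>. if (\<forall>i. \<alpha> i = 0) then 1 else 0)"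

definition pd :: "nat \<Rightarrow> ('k::semiring_1) ser \<Rightarrow> 'k ser" where
  "pd j f = (\<lambda>\<alpha>. of_nat (\<alpha> j + 1) * f (\<alpha>(j := \<alpha> j + 1)))"

definition is_kderivation :: "('k::comm_semiring_1) ser set \<Rightarrow> ('k ser \<Rightarrow> 'k ser) \<Rightarrow> bool" where
  "is_kderivation R d \<longleftrightarrow>
     (\<forall>f\<in>R. d f \<in> R) \<and>
     (\<forall>f\<in>R. \<forall>g\<in>R. d (s_add f g) = s_add (d f) (d g)) \<and>
     (\<forall>c. \<forall>f\<in>R. d (s_smult c f) = s_smult c (d f)) \<and>
     (\<forall>f\<in>R. \<forall>g\<in>R. d (s_mul f g) = s_add (s_mul f (d g)) (s_mul (d f) g))"

definition is_ideal :: "('k::comm_semiring_1) ser set \<Rightarrow> 'k ser set \<Rightarrow> bool" where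
  "is_ideal R I \<longleftrightarrow> I \<subseteq> R \<and> s_zero \<in> I \<and>
     (\<forall>f\<in>I. \<forall>g\<in>I. s_add f g \<in> I) \<and>
     (\<forall>r\<in>R. \<forall>f\<in>I. s_mul r f \<in> I)"

definition D_stable :: "('k ser \<Rightarrow> 'k ser) set \<Rightarrow> 'k ser set \<Rightarrow> bool" where
  "D_stable D I \<longleftrightarrow> (\<forall>d\<in>D. \<forall>f\<in>I. d f \<in> I)"

definition D_simple :: "('k::comm_semiring_1) ser set \<Rightarrow> ('k ser \<Rightarrow> 'k ser) set \<Rightarrow> bool" where
  "D_simple R D \<longleftrightarrow>
     (\<forall>I. is_ideal R I \<and> D_stable D I \<longrightarrow> I = {s_zero} \<or> I = R)"

definition pairwise_commuting :: "'k ser set \<Rightarrow> ('k ser \<Rightarrow> 'k ser) set \<Rightarrow> bool" where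
  "pairwise_commuting R D \<longleftrightarrow> (\<forall>d1\<in>D. \<forall>d2\<in>D. \<forall>f\<in>R. d1 (d2 f) = d2 (d1 f))"

end

theory Submission
  imports Defs
begin

text \<open>Write \<open>x\<^sub>n\<close> for the last variable (index \<open>n - 1\<close> below). A derivation \<open>e\<close> of \<open>R\<close>
  satisfies \<open>e = \<Sum>\<^sub>i e(x\<^sub>i) \<partial>\<^sub>i\<close>, also on power series, by induction on the total degree of
  coefficients. As \<open>\<partial>\<^sub>j\<close> (\<open>j < n\<close>) lies in \<open>D\<close> and commutes with it,
  \<open>\<partial>\<^sub>j e(x\<^sub>n) = e(\<partial>\<^sub>j x\<^sub>n) = 0\<close>; hence \<open>e(y) = e(x\<^sub>n) \<partial>\<^sub>n y\<close> whenever \<open>y\<close> involves only \<open>x\<^sub>n\<close>.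
  If all of \<open>D\<close> kills \<open>x\<^sub>n\<close>, the proper ideal \<open>(x\<^sub>n)\<close> is \<open>D\<close>-stable; otherwise \<open>a = e\<^sub>0(x\<^sub>n) \<noteq> 0\<close>
  satisfies \<open>e(a) = e\<^sub>0(e(x\<^sub>n)) = a \<partial>\<^sub>n e(x\<^sub>n)\<close>, so \<open>(a)\<close> is \<open>D\<close>-stable. Simplicity makes
  \<open>a = d(x\<^sub>n)\<close> a unit with inverse \<open>u\<close>, which again involves only \<open>x\<^sub>n\<close>, and any
  \<open>x\<^sub>n\<close>-antiderivative \<open>f\<^sub>n\<close> of \<open>u\<close> has \<open>d(f\<^sub>n) = a u = 1\<close>. Finally
  \<open>\<partial>\<^sub>n = u (d - (\<Sum>i<n. d(x\<^sub>i) \<partial>\<^sub>i))\<close>, so an ideal stable under \<open>d, \<partial>\<^sub>1, \<dots>, \<partial>\<^bsub>n-1\<^esub>\<close> is stable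
  under every \<open>\<partial>\<^sub>i\<close> and therefore under all of \<open>D\<close>.\<close>

section \<open>Exponent vectors and the Cauchy product\<close>

definition fin_supp :: "(nat \<Rightarrow> nat) \<Rightarrow> bool" where
  "fin_supp \<alpha> \<longleftrightarrow> finite {i. \<alpha> i \<noteq> 0}"

definition exps_le :: "(nat \<Rightarrow> nat) \<Rightarrow> (nat \<Rightarrow> nat) set" where
  "exps_le \<alpha> = {\<beta>. \<forall>i. \<beta> i \<le> \<alpha> i}"

definition unit_exp :: "nat \<Rightarrow> nat \<Rightarrow> nat" where
  "unit_exp k = (\<lambda>j. if j = k then 1 else 0)"

lemma s_mul_exps_le: "s_mul f g \<alpha> = (\<Sum>\<beta>\<in>exps_le \<alpha>. f \<beta> * g (\<lambda>i. \<alpha> i - \<beta> i))"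
  by (simp add: s_mul_def exps_le_def)

lemma fin_supp_zero: "fin_supp (\<lambda>i. 0)"
  by (simp add: fin_supp_def)

lemma fin_supp_unit_exp: "fin_supp (unit_exp k)"
  unfolding fin_supp_def unit_exp_def by (rule finite_subset[of _ "{k}"]) auto

lemma fin_supp_fun_upd: "fin_supp (\<alpha>(j := k)) \<longleftrightarrow> fin_supp \<alpha>"
proof -
  have "{i. (\<alpha>(j := k)) i \<noteq> 0} - {j} = {i. \<alpha> i \<noteq> 0} - {j}" by auto
  hence "finite ({i. (\<alpha>(j := k)) i \<noteq> 0} - {j}) \<longleftrightarrow> finite ({i. \<alpha> i \<noteq> 0} - {j})" by simp
  thus ?thesis unfolding fin_supp_def by simp
qed

lemma fin_supp_exps_le:
  assumes "fin_supp \<alpha>" "\<beta> \<in> exps_le \<alpha>"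
  shows "fin_supp \<beta>"
proof -
  have "{i. \<beta> i \<noteq> 0} \<subseteq> {i. \<alpha> i \<noteq> 0}"
  proof
    fix i assume "i \<in> {i. \<beta> i \<noteq> 0}"
    moreover have "\<beta> i \<le> \<alpha> i" using assms(2) by (simp add: exps_le_def)
    ultimately show "i \<in> {i. \<alpha> i \<noteq> 0}" by simp
  qed
  thus ?thesis using assms(1) unfolding fin_supp_def by (rule finite_subset)
qed

lemma fin_supp_diff: "fin_supp \<alpha> \<Longrightarrow> fin_supp (\<lambda>i. \<alpha> i - \<beta> i)"
  unfolding fin_supp_def by (rule finite_subset[of _ "{i. \<alpha> i \<noteq> 0}"]) auto

lemma finite_exps_le:
  assumes "fin_supp \<alpha>"
  shows "finite (exps_le \<alpha>)"
proof -
  let ?A = "{i. \<alpha> i \<noteq> 0}"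
  have fin: "finite ?A" using assms by (simp add: fin_supp_def)
  have "exps_le \<alpha> \<subseteq> {\<beta>. \<forall>i. (i \<in> ?A \<longrightarrow> \<beta> i \<in> {0..Max (\<alpha> ` ?A)}) \<and> (i \<notin> ?A \<longrightarrow> \<beta> i = 0)}"
  proof (intro subsetI CollectI allI conjI impI)
    fix \<beta> i assume "\<beta> \<in> exps_le \<alpha>"
    hence le: "\<beta> i \<le> \<alpha> i" by (simp add: exps_le_def)
    { assume "i \<in> ?A"
      hence "\<alpha> i \<le> Max (\<alpha> ` ?A)" using fin by (intro Max_ge) auto
      thus "\<beta> i \<in> {0..Max (\<alpha> ` ?A)}" using le by simp }
    { assume "i \<notin> ?A" thus "\<beta> i = 0" using le by simp }
  qed
  thus ?thesis by (rule finite_subset) (intro finite_set_of_finite_funs fin, simp)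
qed

lemma infinite_exps_le:
  assumes "\<not> fin_supp \<alpha>"
  shows "infinite (exps_le \<alpha>)"
proof
  assume fin: "finite (exps_le \<alpha>)"
  have "unit_exp ` {i. \<alpha> i \<noteq> 0} \<subseteq> exps_le \<alpha>"
    by (auto simp: exps_le_def unit_exp_def)
  hence "finite (unit_exp ` {i. \<alpha> i \<noteq> 0})" using fin finite_subset by blast
  moreover have "inj unit_exp"
    by (auto simp: inj_def unit_exp_def fun_eq_iff split: if_splits)
  ultimately have "finite {i. \<alpha> i \<noteq> 0}" using finite_imageD inj_on_subset by blast
  thus False using assms by (simp add: fin_supp_def)
qed

text \<open>The defining sum of the Cauchy product is infinite, hence 0 by convention, at exponent
  vectors of infinite support; all our series vanish there anyway.\<close>
lemma s_mul_not_fin_supp: "\<not> fin_supp \<alpha> \<Longrightarrow> s_mul f g \<alpha> = 0"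
  by (simp add: s_mul_exps_le infinite_exps_le)

lemma s_mul_commute: "s_mul f g = s_mul g (f :: ('k::comm_semiring_0) ser)"
proof
  fix \<alpha>
  show "s_mul f g \<alpha> = s_mul g f \<alpha>"
    unfolding s_mul_exps_le
    by (rule sum.reindex_bij_witness[where i = "\<lambda>\<beta> i. \<alpha> i - \<beta> i" and j = "\<lambda>\<beta> i. \<alpha> i - \<beta> i"])
       (simp_all add: exps_le_def mult.commute fun_eq_iff)
qed

lemma sum_exps_le_chain_reindex:
  "(\<Sum>(\<delta>, \<beta>)\<in>(SIGMA \<delta>:exps_le \<alpha>. exps_le \<delta>). F \<beta> (\<lambda>i. \<delta> i - \<beta> i) (\<lambda>i. \<alpha> i - \<delta> i))
 = (\<Sum>(\<beta>, \<gamma>)\<in>(SIGMA \<beta>:exps_le \<alpha>. exps_le (\<lambda>i. \<alpha> i - \<beta> i)). F \<beta> \<gamma> (\<lambda>i. \<alpha> i - \<beta> i - \<gamma> i))"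
  (is "sum _ ?L = sum _ ?R")
proof (rule sum.reindex_bij_witness[where j = "\<lambda>(\<delta>, \<beta>). (\<beta>, \<lambda>i. \<delta> i - \<beta> i)"
      and i = "\<lambda>(\<beta>, \<gamma>). (\<lambda>i. \<beta> i + \<gamma> i, \<beta>)"])
  fix a assume "a \<in> ?L"
  then obtain \<delta> \<beta> where a: "a = (\<delta>, \<beta>)" and d: "\<And>i. \<delta> i \<le> \<alpha> i" and b: "\<And>i. \<beta> i \<le> \<delta> i"
    by (auto simp: exps_le_def)
  show "(case case a of (\<delta>, \<beta>) \<Rightarrow> (\<beta>, \<lambda>i. \<delta> i - \<beta> i) of (\<beta>, \<gamma>) \<Rightarrow> (\<lambda>i. \<beta> i + \<gamma> i, \<beta>)) = a"
    using b by (simp add: a fun_eq_iff)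
  show "(case a of (\<delta>, \<beta>) \<Rightarrow> (\<beta>, \<lambda>i. \<delta> i - \<beta> i)) \<in> ?R"
    using b d by (simp add: a exps_le_def) (meson diff_le_mono le_trans)
  have "(\<lambda>i. \<alpha> i - \<beta> i - (\<delta> i - \<beta> i)) = (\<lambda>i. \<alpha> i - \<delta> i)"
    using b d by (simp add: fun_eq_iff)
  thus "(case case a of (\<delta>, \<beta>) \<Rightarrow> (\<beta>, \<lambda>i. \<delta> i - \<beta> i) of
            (\<beta>, \<gamma>) \<Rightarrow> F \<beta> \<gamma> (\<lambda>i. \<alpha> i - \<beta> i - \<gamma> i))
        = (case a of (\<delta>, \<beta>) \<Rightarrow> F \<beta> (\<lambda>i. \<delta> i - \<beta> i) (\<lambda>i. \<alpha> i - \<delta> i))"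
    by (simp add: a)
next
  fix a assume "a \<in> ?R"
  then obtain \<beta> \<gamma> where a: "a = (\<beta>, \<gamma>)" and b: "\<And>i. \<beta> i \<le> \<alpha> i" and c: "\<And>i. \<gamma> i \<le> \<alpha> i - \<beta> i"
    by (auto simp: exps_le_def)
  show "(case case a of (\<beta>, \<gamma>) \<Rightarrow> (\<lambda>i. \<beta> i + \<gamma> i, \<beta>) of (\<delta>, \<beta>) \<Rightarrow> (\<beta>, \<lambda>i. \<delta> i - \<beta> i)) = a"
    by (simp add: a)
  show "(case a of (\<beta>, \<gamma>) \<Rightarrow> (\<lambda>i. \<beta> i + \<gamma> i, \<beta>)) \<in> ?L"
    using b c by (simp add: a exps_le_def) (metis le_add_diff_inverse add_le_mono1 add.commute)
qed

lemma s_mul_assoc: "s_mul (s_mul f g) h = s_mul f (s_mul g (h :: ('k::comm_semiring_0) ser))"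
proof
  fix \<alpha>
  show "s_mul (s_mul f g) h \<alpha> = s_mul f (s_mul g h) \<alpha>"
  proof (cases "fin_supp \<alpha>")
    case False
    thus ?thesis by (simp add: s_mul_not_fin_supp)
  next
    case True
    have fin: "finite (exps_le \<alpha>)" "\<And>\<beta>. \<beta> \<in> exps_le \<alpha> \<Longrightarrow> finite (exps_le \<beta>)"
      "\<And>\<beta>. finite (exps_le (\<lambda>i. \<alpha> i - \<beta> i))"
      using True by (auto intro: finite_exps_le fin_supp_exps_le fin_supp_diff)
    have "s_mul (s_mul f g) h \<alpha>
        = (\<Sum>(\<delta>, \<beta>)\<in>(SIGMA \<delta>:exps_le \<alpha>. exps_le \<delta>). f \<beta> * g (\<lambda>i. \<delta> i - \<beta> i) * h (\<lambda>i. \<alpha> i - \<delta> i))"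
      unfolding s_mul_exps_le sum_distrib_right by (rule sum.Sigma) (use fin in auto)
    also have "\<dots> = (\<Sum>(\<beta>, \<gamma>)\<in>(SIGMA \<beta>:exps_le \<alpha>. exps_le (\<lambda>i. \<alpha> i - \<beta> i)).
                         f \<beta> * g \<gamma> * h (\<lambda>i. \<alpha> i - \<beta> i - \<gamma> i))"
      by (rule sum_exps_le_chain_reindex[where F = "\<lambda>b c d. f b * g c * h d"])
    also have "\<dots> = s_mul f (s_mul g h) \<alpha>"
      unfolding s_mul_exps_le sum_distrib_left mult.assoc by (rule sum.Sigma[symmetric]) (use fin in auto)
    finally show ?thesis .
  qed
qed

lemma s_mul_s_add_right: "s_mul f (s_add g h) = s_add (s_mul f g) (s_mul f (h :: ('k::comm_semiring_0) ser))"
  by (simp add: s_mul_def s_add_def distrib_left sum.distrib fun_eq_iff)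

lemma s_one_not_fin_supp: "\<not> fin_supp \<alpha> \<Longrightarrow> s_one \<alpha> = 0"
  using fin_supp_zero by (metis s_one_def ext)

lemma s_one_s_mul:
  assumes "\<And>\<alpha>. \<not> fin_supp \<alpha> \<Longrightarrow> f \<alpha> = 0"
  shows "s_mul s_one f = (f :: ('k::comm_semiring_1) ser)"
proof
  fix \<alpha> show "s_mul s_one f \<alpha> = f \<alpha>"
  proof (cases "fin_supp \<alpha>")
    case False
    thus ?thesis using assms by (simp add: s_mul_not_fin_supp)
  next
    case True
    have "s_mul s_one f \<alpha> = (\<Sum>\<beta>\<in>exps_le \<alpha>. if \<beta> = (\<lambda>i. 0) then f (\<lambda>i. \<alpha> i - \<beta> i) else 0)"
      unfolding s_mul_exps_le s_one_def by (rule sum.cong) (auto simp: fun_eq_iff)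
    also have "\<dots> = f \<alpha>"
      using finite_exps_le[OF True] by (simp add: sum.delta exps_le_def)
    finally show ?thesis .
  qed
qed

lemma s_mul_pd_right_expand:
  fixes j :: nat and \<alpha> :: "nat \<Rightarrow> nat"
  assumes "fin_supp \<alpha>"
  defines "\<alpha>' \<equiv> \<alpha>(j := \<alpha> j + 1)"
  shows "s_mul f (pd j g) \<alpha>
    = (\<Sum>\<beta>\<in>exps_le \<alpha>'. of_nat (\<alpha> j + 1 - \<beta> j) * (f \<beta> * g (\<lambda>i. \<alpha>' i - \<beta> i :: nat)))"
proof -
  have sub: "exps_le \<alpha> \<subseteq> exps_le \<alpha>'" by (auto simp: exps_le_def \<alpha>'_def le_Suc_eq)
  have "s_mul f (pd j g) \<alpha>
      = (\<Sum>\<beta>\<in>exps_le \<alpha>. of_nat (\<alpha> j + 1 - \<beta> j) * (f \<beta> * g (\<lambda>i. \<alpha>' i - \<beta> i)))"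
    unfolding s_mul_exps_le pd_def
  proof (rule sum.cong[OF refl])
    fix \<beta> assume "\<beta> \<in> exps_le \<alpha>"
    hence bj: "\<beta> j \<le> \<alpha> j" by (simp add: exps_le_def)
    have "(\<lambda>i. \<alpha>' i - \<beta> i) = (\<lambda>i. \<alpha> i - \<beta> i)(j := \<alpha> j - \<beta> j + 1)"
      and "\<alpha> j + 1 - \<beta> j = \<alpha> j - \<beta> j + 1"
      using bj by (auto simp: \<alpha>'_def fun_eq_iff)
    thus "f \<beta> * (of_nat ((\<lambda>i. \<alpha> i - \<beta> i) j + 1)
            * g ((\<lambda>i. \<alpha> i - \<beta> i)(j := (\<lambda>i. \<alpha> i - \<beta> i) j + 1)))
        = of_nat (\<alpha> j + 1 - \<beta> j) * (f \<beta> * g (\<lambda>i. \<alpha>' i - \<beta> i))"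
      by (simp add: mult.left_commute del: fun_upd_apply)
  qed
  also have "\<dots> = (\<Sum>\<beta>\<in>exps_le \<alpha>'. of_nat (\<alpha> j + 1 - \<beta> j) * (f \<beta> * g (\<lambda>i. \<alpha>' i - \<beta> i)))"
  proof (rule sum.mono_neutral_left[OF _ sub], rule_tac[2] ballI)
    show "finite (exps_le \<alpha>')" using assms(1) by (simp add: \<alpha>'_def finite_exps_le fin_supp_fun_upd)
  next
    fix \<beta> assume "\<beta> \<in> exps_le \<alpha>' - exps_le \<alpha>"
    then obtain k where "\<beta> k > \<alpha> k" "\<forall>i. \<beta> i \<le> \<alpha>' i" by (auto simp: exps_le_def not_le)
    hence "\<beta> j = \<alpha> j + 1" unfolding \<alpha>'_def by (metis fun_upd_apply le_SucE less_le_not_le Suc_eq_plus1)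
    thus "of_nat (\<alpha> j + 1 - \<beta> j) * (f \<beta> * g (\<lambda>i. \<alpha>' i - \<beta> i)) = 0" by simp
  qed
  finally show ?thesis .
qed

lemma s_mul_pd_left_expand:
  fixes j :: nat and \<alpha> :: "nat \<Rightarrow> nat"
  assumes "fin_supp \<alpha>"
  defines "\<alpha>' \<equiv> \<alpha>(j := \<alpha> j + 1)"
  shows "s_mul (pd j f) g \<alpha>
    = (\<Sum>\<beta>\<in>exps_le \<alpha>'. of_nat (\<beta> j) * (f \<beta> * g (\<lambda>i. \<alpha>' i - \<beta> i :: nat)))"
proof -
  let ?s = "\<lambda>\<gamma>::nat \<Rightarrow> nat. \<gamma>(j := \<gamma> j + 1)"
  have inj: "inj_on ?s (exps_le \<alpha>)"
  proof (rule inj_onI)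
    fix x y :: "nat \<Rightarrow> nat" assume "?s x = ?s y"
    hence h: "\<And>i. ?s x i = ?s y i" by simp
    show "x = y"
    proof
      fix i show "x i = y i" using h[of i] h[of j] by (cases "i = j") auto
    qed
  qed
  have shift: "(\<lambda>i. \<alpha>' i - ?s \<gamma> i) = (\<lambda>i. \<alpha> i - \<gamma> i)" for \<gamma>
    by (simp add: \<alpha>'_def fun_eq_iff)
  have "s_mul (pd j f) g \<alpha>
      = (\<Sum>\<gamma>\<in>exps_le \<alpha>. of_nat (?s \<gamma> j) * (f (?s \<gamma>) * g (\<lambda>i. \<alpha>' i - ?s \<gamma> i)))"
    unfolding s_mul_exps_le pd_def shift by (intro sum.cong refl) (simp add: mult.assoc)
  also have "\<dots> = (\<Sum>\<beta>\<in>?s ` exps_le \<alpha>. of_nat (\<beta> j) * (f \<beta> * g (\<lambda>i. \<alpha>' i - \<beta> i)))"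
    by (simp only: sum.reindex[OF inj] o_def)
  also have "\<dots> = (\<Sum>\<beta>\<in>exps_le \<alpha>'. of_nat (\<beta> j) * (f \<beta> * g (\<lambda>i. \<alpha>' i - \<beta> i)))"
  proof (rule sum.mono_neutral_left, rule_tac[3] ballI)
    show "finite (exps_le \<alpha>')" using assms(1) by (simp add: \<alpha>'_def finite_exps_le fin_supp_fun_upd)
    show "?s ` exps_le \<alpha> \<subseteq> exps_le \<alpha>'" by (auto simp: exps_le_def \<alpha>'_def)
  next
    fix \<beta> assume b: "\<beta> \<in> exps_le \<alpha>' - ?s ` exps_le \<alpha>"
    show "of_nat (\<beta> j) * (f \<beta> * g (\<lambda>i. \<alpha>' i - \<beta> i)) = 0"
    proof (cases "\<beta> j = 0")
      case False
      have bb: "\<forall>i. \<beta> i \<le> \<alpha>' i" using b by (simp add: exps_le_def)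
      have "\<beta>(j := \<beta> j - 1) \<in> exps_le \<alpha>" unfolding exps_le_def
      proof (intro CollectI allI)
        fix i show "(\<beta>(j := \<beta> j - 1)) i \<le> \<alpha> i"
          using bb[rule_format, of i] by (cases "i = j") (auto simp: \<alpha>'_def)
      qed
      moreover have "\<beta> = ?s (\<beta>(j := \<beta> j - 1))" using False by (auto simp: fun_eq_iff)
      ultimately show ?thesis using b by blast
    qed simp
  qed
  finally show ?thesis .
qed

text \<open>Split the factor \<open>\<alpha> j + 1\<close> of the derivative of the product as
  \<open>(\<alpha> j + 1 - \<beta> j) + \<beta> j\<close> inside the Cauchy sum.\<close>
lemma pd_s_mul: "pd j (s_mul f g) = s_add (s_mul f (pd j g)) (s_mul (pd j f) (g :: ('k::comm_semiring_1) ser))"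
proof
  fix \<alpha> :: "nat \<Rightarrow> nat"
  let ?a = "\<alpha>(j := \<alpha> j + 1)"
  show "pd j (s_mul f g) \<alpha> = s_add (s_mul f (pd j g)) (s_mul (pd j f) g) \<alpha>"
  proof (cases "fin_supp \<alpha>")
    case False
    thus ?thesis by (simp add: pd_def s_add_def s_mul_not_fin_supp fin_supp_fun_upd)
  next
    case True
    have "pd j (s_mul f g) \<alpha> = (\<Sum>\<beta>\<in>exps_le ?a. of_nat (\<alpha> j + 1) * (f \<beta> * g (\<lambda>i. ?a i - \<beta> i)))"
      unfolding pd_def s_mul_exps_le by (simp add: sum_distrib_left)
    also have "\<dots> = (\<Sum>\<beta>\<in>exps_le ?a. of_nat (\<alpha> j + 1 - \<beta> j) * (f \<beta> * g (\<lambda>i. ?a i - \<beta> i))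
                     + of_nat (\<beta> j) * (f \<beta> * g (\<lambda>i. ?a i - \<beta> i)))"
    proof (rule sum.cong[OF refl])
      fix \<beta> assume "\<beta> \<in> exps_le ?a"
      hence "\<beta> j \<le> \<alpha> j + 1" by (auto simp: exps_le_def dest: spec[of _ j])
      hence "of_nat (\<alpha> j + 1) = (of_nat (\<alpha> j + 1 - \<beta> j) + of_nat (\<beta> j) :: 'k)"
        by (simp only: of_nat_add[symmetric]) simp
      thus "of_nat (\<alpha> j + 1) * (f \<beta> * g (\<lambda>i. ?a i - \<beta> i))
          = of_nat (\<alpha> j + 1 - \<beta> j) * (f \<beta> * g (\<lambda>i. ?a i - \<beta> i))
            + of_nat (\<beta> j) * (f \<beta> * g (\<lambda>i. ?a i - \<beta> i))"
        by (simp add: distrib_right)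
    qed
    also have "\<dots> = s_add (s_mul f (pd j g)) (s_mul (pd j f) g) \<alpha>"
      by (simp only: sum.distrib s_mul_pd_right_expand[OF True] s_mul_pd_left_expand[OF True] s_add_def)
    finally show ?thesis .
  qed
qed

section \<open>The ring of series with finitely supported exponents\<close>

text \<open>Series vanishing at all exponent vectors of infinite support form a commutative ring
  containing both \<open>k[x\<^sub>1,\<dots>,x\<^sub>n]\<close> and \<open>k[[x\<^sub>1,\<dots>,x\<^sub>n]]\<close>; computing in this type gives
  access to the generic ring automation.\<close>
typedef (overloaded) 'k mser = "{f :: ('k::comm_ring_1) ser. \<forall>\<alpha>. \<not> fin_supp \<alpha> \<longrightarrow> f \<alpha> = 0}"
  by (rule exI[of _ "\<lambda>_. 0"]) auto

lemma Rep_mser_not_fin_supp: "\<not> fin_supp \<alpha> \<Longrightarrow> Rep_mser x \<alpha> = 0"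
  using Rep_mser[of x] by auto

lemma Rep_Abs_mser: "(\<And>\<alpha>. \<not> fin_supp \<alpha> \<Longrightarrow> f \<alpha> = 0) \<Longrightarrow> Rep_mser (Abs_mser f) = f"
  by (rule Abs_mser_inverse) auto

instantiation mser :: (comm_ring_1) comm_ring_1
begin

definition zero_mser_def: "0 = Abs_mser s_zero"
definition one_mser_def: "1 = Abs_mser s_one"
definition plus_mser_def: "x + y = Abs_mser (s_add (Rep_mser x) (Rep_mser y))"
definition uminus_mser_def: "- x = Abs_mser (\<lambda>\<alpha>. - Rep_mser x \<alpha>)"
definition minus_mser_def: "x - y = Abs_mser (\<lambda>\<alpha>. Rep_mser x \<alpha> - Rep_mser y \<alpha>)"
definition times_mser_def: "x * y = Abs_mser (s_mul (Rep_mser x) (Rep_mser y))"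

lemma Rep_mser_zero: "Rep_mser 0 = s_zero"
  unfolding zero_mser_def by (rule Rep_Abs_mser) (simp add: s_zero_def)

lemma Rep_mser_one: "Rep_mser 1 = s_one"
  unfolding one_mser_def by (rule Rep_Abs_mser) (rule s_one_not_fin_supp)

lemma Rep_mser_add: "Rep_mser (x + y) = s_add (Rep_mser x) (Rep_mser y)"
  unfolding plus_mser_def by (rule Rep_Abs_mser) (simp add: s_add_def Rep_mser_not_fin_supp)

lemma Rep_mser_uminus: "Rep_mser (- x) = (\<lambda>\<alpha>. - Rep_mser x \<alpha>)"
  unfolding uminus_mser_def by (rule Rep_Abs_mser) (simp add: Rep_mser_not_fin_supp)

lemma Rep_mser_minus: "Rep_mser (x - y) = (\<lambda>\<alpha>. Rep_mser x \<alpha> - Rep_mser y \<alpha>)"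
  unfolding minus_mser_def by (rule Rep_Abs_mser) (simp add: Rep_mser_not_fin_supp)

lemma Rep_mser_mult: "Rep_mser (x * y) = s_mul (Rep_mser x) (Rep_mser y)"
  unfolding times_mser_def by (rule Rep_Abs_mser) (simp add: s_mul_not_fin_supp)

instance
proof
  fix a b c :: "'a mser"
  show "a * b * c = a * (b * c)"
    by (simp add: Rep_mser_inject[symmetric] Rep_mser_mult s_mul_assoc)
  show "a * b = b * a"
    by (simp add: Rep_mser_inject[symmetric] Rep_mser_mult s_mul_commute)
  show "1 * a = a"
    by (simp add: Rep_mser_inject[symmetric] Rep_mser_mult Rep_mser_one s_one_s_mul Rep_mser_not_fin_supp)
  show "(a + b) * c = a * c + b * c"
    by (simp add: Rep_mser_inject[symmetric] Rep_mser_mult Rep_mser_add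
        s_mul_commute[of _ "Rep_mser c"] s_mul_s_add_right)
  show "a + b + c = a + (b + c)"
    by (simp add: Rep_mser_inject[symmetric] Rep_mser_add s_add_def add.assoc)
  show "a + b = b + a"
    by (simp add: Rep_mser_inject[symmetric] Rep_mser_add s_add_def add.commute)
  show "0 + a = a"
    by (simp add: Rep_mser_inject[symmetric] Rep_mser_add Rep_mser_zero s_add_def s_zero_def)
  show "- a + a = 0"
    by (simp add: Rep_mser_inject[symmetric] Rep_mser_add Rep_mser_zero Rep_mser_uminus s_add_def s_zero_def)
  show "a - b = a + - b"
    by (simp add: Rep_mser_inject[symmetric] Rep_mser_add Rep_mser_minus Rep_mser_uminus s_add_def)
  have "Rep_mser (0 :: 'a mser) (\<lambda>i. 0) \<noteq> Rep_mser (1 :: 'a mser) (\<lambda>i. 0)"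
    by (simp add: Rep_mser_zero Rep_mser_one s_zero_def s_one_def)
  thus "(0 :: 'a mser) \<noteq> 1" by metis
qed

end

lemma Rep_mser_sum: "Rep_mser (sum F A) = (\<lambda>\<alpha>. \<Sum>a\<in>A. Rep_mser (F a) \<alpha>)"
  by (induction A rule: infinite_finite_induct) (simp_all add: Rep_mser_zero Rep_mser_add s_zero_def s_add_def)

definition series_ring :: "nat \<Rightarrow> ('k::comm_ring_1) ser set \<Rightarrow> bool" where
  "series_ring n R \<longleftrightarrow> R = poly_carrier n \<or> R = ps_carrier n"

definition var :: "nat \<Rightarrow> ('k::{zero,one}) ser" where
  "var i = (\<lambda>\<alpha>. if \<alpha> = unit_exp i then 1 else 0)"

lemma exps_fin_supp: "\<alpha> \<in> exps n \<Longrightarrow> fin_supp \<alpha>"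
  unfolding exps_def fin_supp_def by (rule finite_subset[of _ "{..<n}"]) (auto simp: not_less[symmetric])

context
  fixes n :: nat and R :: "('k::comm_ring_1) ser set"
  assumes R: "series_ring n R"
begin

lemma series_ring_vanishes: "f \<in> R \<Longrightarrow> \<alpha> \<notin> exps n \<Longrightarrow> f \<alpha> = 0"
  using R by (auto simp: series_ring_def poly_carrier_def ps_carrier_def)

lemma series_ring_not_fin_supp: "f \<in> R \<Longrightarrow> \<not> fin_supp \<alpha> \<Longrightarrow> f \<alpha> = 0"
  using series_ring_vanishes exps_fin_supp by blast

lemma series_ringI:
  assumes "\<And>\<alpha>. \<alpha> \<notin> exps n \<Longrightarrow> f \<alpha> = 0" and "R = poly_carrier n \<Longrightarrow> finite {\<alpha>. f \<alpha> \<noteq> 0}"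
  shows "f \<in> R"
  using R assms by (auto simp: series_ring_def poly_carrier_def ps_carrier_def)

lemma series_ring_finite: "R = poly_carrier n \<Longrightarrow> f \<in> R \<Longrightarrow> finite {\<alpha>. f \<alpha> \<noteq> 0}"
  by (simp add: poly_carrier_def)

lemma series_ring_reindex:
  assumes f: "f \<in> R"
    and nz: "\<And>\<alpha>. g \<alpha> \<noteq> 0 \<Longrightarrow> f (\<sigma> \<alpha>) \<noteq> 0"
    and exps: "\<And>\<alpha>. \<alpha> \<notin> exps n \<Longrightarrow> \<sigma> \<alpha> \<notin> exps n"
    and inj: "inj_on \<sigma> {\<alpha>. g \<alpha> \<noteq> 0}"
  shows "g \<in> R"
proof (rule series_ringI)
  fix \<alpha> assume "\<alpha> \<notin> exps n"
  hence "f (\<sigma> \<alpha>) = 0" using exps series_ring_vanishes[OF f] by blast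
  thus "g \<alpha> = 0" using nz by blast
next
  assume "R = poly_carrier n"
  hence "finite {\<beta>. f \<beta> \<noteq> 0}" using f by (rule series_ring_finite)
  moreover have "\<sigma> ` {\<alpha>. g \<alpha> \<noteq> 0} \<subseteq> {\<beta>. f \<beta> \<noteq> 0}" using nz by blast
  ultimately have "finite (\<sigma> ` {\<alpha>. g \<alpha> \<noteq> 0})" by (rule finite_subset[rotated])
  thus "finite {\<alpha>. g \<alpha> \<noteq> 0}" using inj by (rule finite_imageD)
qed

lemma series_ring_shift:
  assumes "f \<in> R" and "\<And>\<alpha>. g \<alpha> \<noteq> 0 \<Longrightarrow> f (\<alpha>(j := \<alpha> j + 1)) \<noteq> 0"
  shows "g \<in> R"
proof (rule series_ring_reindex[where \<sigma> = "\<lambda>\<alpha>. \<alpha>(j := \<alpha> j + 1)", OF assms])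
  fix \<alpha> :: "nat \<Rightarrow> nat" assume "\<alpha> \<notin> exps n"
  then obtain i where "i \<ge> n" "\<alpha> i \<noteq> 0" by (auto simp: exps_def)
  thus "\<alpha>(j := \<alpha> j + 1) \<notin> exps n" by (auto simp: exps_def)
next
  show "inj_on (\<lambda>\<alpha>. \<alpha>(j := \<alpha> j + 1)) {\<alpha>. g \<alpha> \<noteq> 0}"
  proof (rule inj_onI)
    fix x y :: "nat \<Rightarrow> nat" assume "x(j := x j + 1) = y(j := y j + 1)"
    hence h: "\<And>i. (x(j := x j + 1)) i = (y(j := y j + 1)) i" by simp
    show "x = y"
    proof
      fix i show "x i = y i" using h[of i] h[of j] by (cases "i = j") auto
    qed
  qed
qed

lemma series_ring_zero: "s_zero \<in> R"
  by (rule series_ringI) (auto simp: s_zero_def)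

lemma series_ring_one: "s_one \<in> R"
proof (rule series_ringI)
  fix \<alpha> :: "nat \<Rightarrow> nat" assume "\<alpha> \<notin> exps n"
  thus "s_one \<alpha> = 0" by (auto simp: exps_def s_one_def)
next
  have "{\<alpha>. s_one \<alpha> \<noteq> (0 :: 'k)} \<subseteq> {\<lambda>i. 0}" by (auto simp: s_one_def fun_eq_iff)
  thus "finite {\<alpha>. s_one \<alpha> \<noteq> (0 :: 'k)}" by (rule finite_subset) simp
qed

lemma series_ring_var: "i < n \<Longrightarrow> var i \<in> R"
proof (rule series_ringI)
  fix \<alpha> :: "nat \<Rightarrow> nat" assume "i < n" "\<alpha> \<notin> exps n"
  hence "\<alpha> \<noteq> unit_exp i" by (auto simp: exps_def unit_exp_def)
  thus "var i \<alpha> = 0" by (simp add: var_def)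
next
  have "{\<alpha>. var i \<alpha> \<noteq> (0 :: 'k)} \<subseteq> {unit_exp i}" by (auto simp: var_def)
  thus "finite {\<alpha>. var i \<alpha> \<noteq> (0 :: 'k)}" by (rule finite_subset) simp
qed

lemma series_ring_add:
  assumes "f \<in> R" "g \<in> R"
  shows "s_add f g \<in> R"
proof (rule series_ringI)
  fix \<alpha> assume "\<alpha> \<notin> exps n"
  thus "s_add f g \<alpha> = 0" using assms by (simp add: s_add_def series_ring_vanishes)
next
  assume "R = poly_carrier n"
  hence "finite ({\<alpha>. f \<alpha> \<noteq> 0} \<union> {\<alpha>. g \<alpha> \<noteq> 0})" using assms series_ring_finite by blast
  thus "finite {\<alpha>. s_add f g \<alpha> \<noteq> 0}" by (rule finite_subset[rotated]) (auto simp: s_add_def)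
qed

lemma series_ring_smult: "f \<in> R \<Longrightarrow> s_smult c f \<in> R"
  by (erule series_ring_reindex[where \<sigma> = id]) (auto simp: s_smult_def)

lemma series_ring_uminus: "f \<in> R \<Longrightarrow> (\<lambda>\<alpha>. - f \<alpha>) \<in> R"
  by (erule series_ring_reindex[where \<sigma> = id]) auto

lemma series_ring_pd: "f \<in> R \<Longrightarrow> pd j f \<in> R"
  by (erule series_ring_shift[where j = j]) (auto simp: pd_def)

lemma s_mul_ps_carrier:
  assumes f: "f \<in> ps_carrier n" and g: "g \<in> ps_carrier n"
  shows "s_mul f g \<in> ps_carrier n"
  unfolding ps_carrier_def
proof (intro CollectI allI impI)
  fix \<alpha> assume "\<alpha> \<notin> exps n"
  then obtain k where k: "k \<ge> n" "\<alpha> k \<noteq> 0" by (auto simp: exps_def)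
  have "f \<beta> * g (\<lambda>i. \<alpha> i - \<beta> i) = 0" for \<beta>
  proof (cases "\<beta> k = 0")
    case True
    hence "(\<lambda>i. \<alpha> i - \<beta> i) \<notin> exps n" using k by (auto simp: exps_def)
    thus ?thesis using g by (simp add: ps_carrier_def)
  next
    case False
    hence "\<beta> \<notin> exps n" using k by (auto simp: exps_def)
    thus ?thesis using f by (simp add: ps_carrier_def)
  qed
  thus "s_mul f g \<alpha> = 0" by (simp add: s_mul_exps_le)
qed

lemma s_mul_poly_carrier:
  assumes f: "f \<in> poly_carrier n" and g: "g \<in> poly_carrier n"
  shows "s_mul f g \<in> poly_carrier n"
proof -
  have "{\<alpha>. s_mul f g \<alpha> \<noteq> 0} \<subseteq> (\<lambda>(\<beta>, \<gamma>) i. \<beta> i + \<gamma> i) ` ({\<beta>. f \<beta> \<noteq> 0} \<times> {\<gamma>. g \<gamma> \<noteq> 0})"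
  proof
    fix \<alpha> assume "\<alpha> \<in> {\<alpha>. s_mul f g \<alpha> \<noteq> 0}"
    hence "(\<Sum>\<beta>\<in>exps_le \<alpha>. f \<beta> * g (\<lambda>i. \<alpha> i - \<beta> i)) \<noteq> 0" by (simp add: s_mul_exps_le)
    then obtain \<beta> where b: "\<beta> \<in> exps_le \<alpha>" "f \<beta> * g (\<lambda>i. \<alpha> i - \<beta> i) \<noteq> 0"
      by (meson sum.not_neutral_contains_not_neutral)
    have "\<alpha> = (\<lambda>i. \<beta> i + (\<alpha> i - \<beta> i))" using b(1) by (auto simp: exps_le_def fun_eq_iff)
    thus "\<alpha> \<in> (\<lambda>(\<beta>, \<gamma>) i. \<beta> i + \<gamma> i) ` ({\<beta>. f \<beta> \<noteq> 0} \<times> {\<gamma>. g \<gamma> \<noteq> 0})"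
      using b(2) by (intro image_eqI[of _ _ "(\<beta>, \<lambda>i. \<alpha> i - \<beta> i)"]) auto
  qed
  moreover have "finite ({\<beta>. f \<beta> \<noteq> 0} \<times> {\<gamma>. g \<gamma> \<noteq> 0})"
    using f g by (simp add: poly_carrier_def)
  ultimately have "finite {\<alpha>. s_mul f g \<alpha> \<noteq> 0}" using finite_subset by blast
  thus ?thesis using f g s_mul_ps_carrier[of f g] by (auto simp: poly_carrier_def)
qed

lemma series_ring_mul: "f \<in> R \<Longrightarrow> g \<in> R \<Longrightarrow> s_mul f g \<in> R"
  using R s_mul_poly_carrier s_mul_ps_carrier by (auto simp: series_ring_def)

end

definition mcarrier :: "('k::comm_ring_1) ser set \<Rightarrow> 'k mser set" where
  "mcarrier R = {x. Rep_mser x \<in> R}"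

definition mconst :: "'k \<Rightarrow> ('k::comm_ring_1) mser" where
  "mconst c = Abs_mser (s_smult c s_one)"

definition mvar :: "nat \<Rightarrow> ('k::comm_ring_1) mser" where
  "mvar i = Abs_mser (var i)"

definition mpd :: "nat \<Rightarrow> ('k::comm_ring_1) mser \<Rightarrow> 'k mser" where
  "mpd i x = Abs_mser (pd i (Rep_mser x))"

definition mder :: "('k ser \<Rightarrow> 'k ser) \<Rightarrow> ('k::comm_ring_1) mser \<Rightarrow> 'k mser" where
  "mder e x = Abs_mser (e (Rep_mser x))"

lemma Rep_mconst: "Rep_mser (mconst c) = s_smult c s_one"
  unfolding mconst_def by (rule Rep_Abs_mser) (simp add: s_smult_def s_one_not_fin_supp)

lemma Rep_mvar: "Rep_mser (mvar i) = var i"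
  unfolding mvar_def by (rule Rep_Abs_mser) (use fin_supp_unit_exp in \<open>auto simp: var_def\<close>)

lemma Rep_mpd: "Rep_mser (mpd i x) = pd i (Rep_mser x)"
  unfolding mpd_def by (rule Rep_Abs_mser) (simp add: pd_def Rep_mser_not_fin_supp fin_supp_fun_upd)

lemma Rep_mvar_mult:
  "Rep_mser (mvar j * y) \<gamma> = (if \<gamma> j \<ge> 1 then Rep_mser y (\<gamma>(j := \<gamma> j - 1)) else 0)"
proof (cases "fin_supp \<gamma>")
  case False
  thus ?thesis by (simp add: Rep_mser_not_fin_supp fin_supp_fun_upd)
next
  case True
  have "Rep_mser (mvar j * y) \<gamma>
      = (\<Sum>\<beta>\<in>exps_le \<gamma>. if \<beta> = unit_exp j then Rep_mser y (\<lambda>i. \<gamma> i - \<beta> i) else 0)"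
    unfolding Rep_mser_mult Rep_mvar s_mul_exps_le var_def by (rule sum.cong) auto
  also have "\<dots> = (if unit_exp j \<in> exps_le \<gamma> then Rep_mser y (\<lambda>i. \<gamma> i - unit_exp j i) else 0)"
    using finite_exps_le[OF True] by (simp add: sum.delta)
  also have "unit_exp j \<in> exps_le \<gamma> \<longleftrightarrow> \<gamma> j \<ge> 1"
    by (auto simp: exps_le_def unit_exp_def dest: spec[of _ j])
  also have "(\<lambda>i. \<gamma> i - unit_exp j i) = \<gamma>(j := \<gamma> j - 1)"
    by (auto simp: unit_exp_def fun_eq_iff)
  finally show ?thesis .
qed

lemma mpd_mult: "mpd i (x * y) = x * mpd i y + mpd i x * y"
  by (simp add: Rep_mser_inject[symmetric] Rep_mpd Rep_mser_mult Rep_mser_add pd_s_mul)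

lemma mpd_add: "mpd i (x + y) = mpd i x + mpd i y"
  by (simp add: Rep_mser_inject[symmetric] Rep_mpd Rep_mser_add pd_def s_add_def distrib_left fun_eq_iff)

lemma mpd_zero: "mpd i 0 = 0"
  by (simp add: Rep_mser_inject[symmetric] Rep_mpd Rep_mser_zero pd_def fun_eq_iff s_zero_def)

lemma mpd_sum: "mpd i (sum F A) = (\<Sum>a\<in>A. mpd i (F a))"
  by (induction A rule: infinite_finite_induct) (simp_all add: mpd_zero mpd_add)

lemma s_one_fun_upd_Suc: "s_one (\<alpha>(i := Suc k)) = 0"
proof -
  have "\<not> (\<forall>j. (\<alpha>(i := Suc k)) j = 0)" by (metis fun_upd_same nat.distinct(1))
  thus ?thesis unfolding s_one_def by (rule if_not_P)
qed

lemma mpd_mconst: "mpd i (mconst c) = 0"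
  by (simp add: Rep_mser_inject[symmetric] Rep_mpd Rep_mser_zero Rep_mconst pd_def fun_eq_iff
      s_zero_def s_smult_def s_one_fun_upd_Suc)

lemma mpd_one: "mpd i 1 = 0"
  by (simp add: Rep_mser_inject[symmetric] Rep_mpd Rep_mser_zero Rep_mser_one pd_def fun_eq_iff
      s_zero_def s_one_fun_upd_Suc)

lemma mpd_mvar: "mpd i (mvar j) = of_bool (i = j)"
proof (cases "i = j")
  case True
  have "\<alpha>(j := Suc (\<alpha> j)) = unit_exp j \<longleftrightarrow> \<alpha> = (\<lambda>i. 0)" for \<alpha> :: "nat \<Rightarrow> nat"
    by (auto simp: unit_exp_def fun_eq_iff split: if_splits)
  thus ?thesis
    using True by (simp add: Rep_mser_inject[symmetric] Rep_mpd Rep_mser_one Rep_mvar pd_def var_def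
        s_one_def fun_eq_iff)
next
  case False
  have "\<alpha>(i := Suc (\<alpha> i)) \<noteq> unit_exp j" for \<alpha> :: "nat \<Rightarrow> nat"
    using False by (auto simp: unit_exp_def fun_eq_iff dest: spec[of _ i])
  hence "pd i (var j) = (s_zero :: 'a ser)" by (intro ext) (simp add: pd_def var_def s_zero_def)
  thus ?thesis using False by (simp add: Rep_mser_inject[symmetric] Rep_mpd Rep_mser_zero Rep_mvar)
qed

context
  fixes n :: nat and R :: "('k::comm_ring_1) ser set"
  assumes R: "series_ring n R"
begin

lemma Rep_Abs_series_ring: "f \<in> R \<Longrightarrow> Rep_mser (Abs_mser f) = f"
  using series_ring_not_fin_supp[OF R] by (intro Rep_Abs_mser) blast

lemma Abs_mser_in_mcarrier: "f \<in> R \<Longrightarrow> Abs_mser f \<in> mcarrier R"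
  by (simp add: mcarrier_def Rep_Abs_series_ring)

lemma mcarrier_zero: "0 \<in> mcarrier R"
  by (simp add: mcarrier_def Rep_mser_zero series_ring_zero[OF R])

lemma mcarrier_one: "1 \<in> mcarrier R"
  by (simp add: mcarrier_def Rep_mser_one series_ring_one[OF R])

lemma mcarrier_add: "x \<in> mcarrier R \<Longrightarrow> y \<in> mcarrier R \<Longrightarrow> x + y \<in> mcarrier R"
  by (simp add: mcarrier_def Rep_mser_add series_ring_add[OF R])

lemma mcarrier_mult: "x \<in> mcarrier R \<Longrightarrow> y \<in> mcarrier R \<Longrightarrow> x * y \<in> mcarrier R"
  by (simp add: mcarrier_def Rep_mser_mult series_ring_mul[OF R])

lemma mcarrier_uminus: "x \<in> mcarrier R \<Longrightarrow> - x \<in> mcarrier R"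
  by (simp add: mcarrier_def Rep_mser_uminus series_ring_uminus[OF R])

lemma mcarrier_diff: "x \<in> mcarrier R \<Longrightarrow> y \<in> mcarrier R \<Longrightarrow> x - y \<in> mcarrier R"
  by (simp only: diff_conv_add_uminus mcarrier_add mcarrier_uminus)

lemma mcarrier_sum: "(\<And>a. a \<in> A \<Longrightarrow> F a \<in> mcarrier R) \<Longrightarrow> sum F A \<in> mcarrier R"
  by (induction A rule: infinite_finite_induct) (simp_all add: mcarrier_zero mcarrier_add)

lemma mcarrier_mconst: "mconst c \<in> mcarrier R"
  by (simp add: mcarrier_def Rep_mconst series_ring_smult[OF R series_ring_one[OF R]])

lemma mcarrier_mvar: "i < n \<Longrightarrow> mvar i \<in> mcarrier R"
  by (simp add: mcarrier_def Rep_mvar series_ring_var[OF R])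

lemma mcarrier_mpd: "x \<in> mcarrier R \<Longrightarrow> mpd i x \<in> mcarrier R"
  by (simp add: mcarrier_def Rep_mpd series_ring_pd[OF R])

context
  fixes e :: "'k ser \<Rightarrow> 'k ser"
  assumes e: "is_kderivation R e"
begin

lemma Rep_mder: "x \<in> mcarrier R \<Longrightarrow> Rep_mser (mder e x) = e (Rep_mser x)"
  using e unfolding mder_def mcarrier_def is_kderivation_def by (intro Rep_Abs_series_ring) auto

lemma mcarrier_mder: "x \<in> mcarrier R \<Longrightarrow> mder e x \<in> mcarrier R"
  using e by (simp add: Rep_mder mcarrier_def is_kderivation_def)

lemma mder_add:
  assumes "x \<in> mcarrier R" "y \<in> mcarrier R"
  shows "mder e (x + y) = mder e x + mder e y"
proof -
  have "Rep_mser (mder e (x + y)) = e (s_add (Rep_mser x) (Rep_mser y))"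
    using assms by (simp add: Rep_mder mcarrier_add Rep_mser_add)
  also have "\<dots> = s_add (e (Rep_mser x)) (e (Rep_mser y))"
    using assms e by (simp add: is_kderivation_def mcarrier_def)
  also have "\<dots> = Rep_mser (mder e x + mder e y)"
    using assms by (simp add: Rep_mser_add Rep_mder)
  finally show ?thesis by (simp add: Rep_mser_inject)
qed

lemma mder_mult:
  assumes "x \<in> mcarrier R" "y \<in> mcarrier R"
  shows "mder e (x * y) = x * mder e y + mder e x * y"
proof -
  have "Rep_mser (mder e (x * y)) = e (s_mul (Rep_mser x) (Rep_mser y))"
    using assms by (simp add: Rep_mder mcarrier_mult Rep_mser_mult)
  also have "\<dots> = s_add (s_mul (Rep_mser x) (e (Rep_mser y))) (s_mul (e (Rep_mser x)) (Rep_mser y))"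
    using assms e by (simp add: is_kderivation_def mcarrier_def)
  also have "\<dots> = Rep_mser (x * mder e y + mder e x * y)"
    using assms by (simp add: Rep_mser_add Rep_mser_mult Rep_mder)
  finally show ?thesis by (simp add: Rep_mser_inject)
qed

lemma mder_zero: "mder e 0 = 0"
  using mder_add[OF mcarrier_zero mcarrier_zero] by simp

lemma mder_one: "mder e 1 = 0"
  using mder_mult[OF mcarrier_one mcarrier_one] by simp

lemma mder_mconst: "mder e (mconst c) = 0"
proof -
  have "Rep_mser (mder e (mconst c)) = e (s_smult c (Rep_mser 1))"
    by (simp add: Rep_mder mcarrier_mconst Rep_mconst Rep_mser_one)
  also have "\<dots> = s_smult c (Rep_mser (mder e 1))"
    using e mcarrier_one by (simp add: is_kderivation_def mcarrier_def Rep_mder)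
  finally show ?thesis
    by (simp add: mder_one Rep_mser_zero s_smult_def s_zero_def Rep_mser_inject[symmetric])
qed

lemma mder_sum:
  "(\<And>a. a \<in> A \<Longrightarrow> F a \<in> mcarrier R) \<Longrightarrow> mder e (sum F A) = (\<Sum>a\<in>A. mder e (F a))"
proof (induction A rule: infinite_finite_induct)
  case (insert a A)
  thus ?case by (simp add: mder_add mcarrier_sum)
qed (simp_all add: mder_zero)

end

end

section \<open>Derivations are determined by their values on the variables\<close>

text \<open>\<open>var_quot j x\<close> collects the terms of \<open>x\<close> whose first variable of positive exponent is
  \<open>x\<^sub>j\<close>, divided by \<open>x\<^sub>j\<close>; hence \<open>x = x(0) + \<Sum>\<^sub>j x\<^sub>j \<cdot> var_quot j x\<close>.\<close>
definition var_quot :: "nat \<Rightarrow> ('k::comm_ring_1) mser \<Rightarrow> 'k mser" where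
  "var_quot j x = Abs_mser (\<lambda>\<alpha>. if \<forall>k<j. \<alpha> k = 0 then Rep_mser x (\<alpha>(j := \<alpha> j + 1)) else 0)"

lemma sum_fun_upd_decrease:
  fixes \<gamma> :: "nat \<Rightarrow> nat"
  assumes "j < n" "\<gamma> j \<ge> 1"
  shows "(\<Sum>i<n. (\<gamma>(j := \<gamma> j - 1)) i) < (\<Sum>i<n. \<gamma> i)"
proof -
  have j: "j \<in> {..<n}" using assms(1) by simp
  have "(\<Sum>i<n. (\<gamma>(j := \<gamma> j - 1)) i) = (\<gamma> j - 1) + (\<Sum>i\<in>{..<n} - {j}. \<gamma> i)"
    by (simp add: sum.remove[OF finite_lessThan j])
  also have "\<dots> < \<gamma> j + (\<Sum>i\<in>{..<n} - {j}. \<gamma> i)"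
    using assms(2) by simp
  also have "\<dots> = (\<Sum>i<n. \<gamma> i)"
    by (simp add: sum.remove[OF finite_lessThan j])
  finally show ?thesis .
qed

lemma sum_first_nonzero:
  fixes \<gamma> :: "nat \<Rightarrow> nat"
  assumes "\<gamma> \<in> exps n" "\<gamma> \<noteq> (\<lambda>i. 0)"
  shows "(\<Sum>j<n. if \<gamma> j \<ge> 1 \<and> (\<forall>k<j. \<gamma> k = 0) then c else 0) = c"
proof -
  define j0 where "j0 = (LEAST j. \<gamma> j \<noteq> 0)"
  obtain i0 where "\<gamma> i0 \<noteq> 0" using assms(2) by auto
  hence j0: "\<gamma> j0 \<noteq> 0" unfolding j0_def by (rule LeastI)
  have "j0 < n" using j0 assms(1) by (auto simp: exps_def not_less[symmetric])
  moreover have "\<gamma> j \<ge> 1 \<and> (\<forall>k<j. \<gamma> k = 0) \<longleftrightarrow> j = j0" for j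
  proof
    assume "\<gamma> j \<ge> 1 \<and> (\<forall>k<j. \<gamma> k = 0)"
    thus "j = j0" unfolding j0_def by (intro Least_equality[symmetric]) (auto simp: not_less[symmetric])
  next
    assume "j = j0"
    thus "\<gamma> j \<ge> 1 \<and> (\<forall>k<j. \<gamma> k = 0)" using j0 by (auto simp: j0_def dest: not_less_Least)
  qed
  ultimately show ?thesis by (simp add: sum.delta)
qed

context
  fixes n :: nat and R :: "('k::comm_ring_1) ser set"
  assumes R: "series_ring n R"
begin

lemma var_quot_in_series_ring:
  assumes "x \<in> mcarrier R"
  shows "(\<lambda>\<alpha>. if \<forall>k<j. \<alpha> k = 0 then Rep_mser x (\<alpha>(j := \<alpha> j + 1)) else 0) \<in> R"
  by (rule series_ring_shift[OF R, where j = j]) (use assms in \<open>auto simp: mcarrier_def split: if_splits\<close>)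

lemma mcarrier_var_quot: "x \<in> mcarrier R \<Longrightarrow> var_quot j x \<in> mcarrier R"
  unfolding var_quot_def by (rule Abs_mser_in_mcarrier[OF R var_quot_in_series_ring])

lemma Rep_mvar_mult_var_quot:
  assumes "x \<in> mcarrier R"
  shows "Rep_mser (mvar j * var_quot j x) \<gamma>
    = (if \<gamma> j \<ge> 1 \<and> (\<forall>k<j. \<gamma> k = 0) then Rep_mser x \<gamma> else 0)"
proof -
  have "(\<gamma>(j := \<gamma> j - 1))(j := (\<gamma>(j := \<gamma> j - 1)) j + 1) = \<gamma>" if "\<gamma> j \<ge> 1"
    using that by (auto simp: fun_eq_iff)
  thus ?thesis
    by (auto simp: Rep_mvar_mult var_quot_def Rep_Abs_series_ring[OF R var_quot_in_series_ring[OF assms]])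
qed

lemma mvar_decomposition:
  assumes x: "x \<in> mcarrier R"
  shows "x = mconst (Rep_mser x (\<lambda>i. 0)) + (\<Sum>j<n. mvar j * var_quot j x)"
proof -
  have "Rep_mser (mconst (Rep_mser x (\<lambda>i. 0)) + (\<Sum>j<n. mvar j * var_quot j x)) \<gamma> = Rep_mser x \<gamma>"
    for \<gamma>
  proof -
    let ?C = "\<lambda>j. \<gamma> j \<ge> 1 \<and> (\<forall>k<j. \<gamma> k = 0)"
    have rhs: "Rep_mser (mconst (Rep_mser x (\<lambda>i. 0)) + (\<Sum>j<n. mvar j * var_quot j x)) \<gamma>
        = Rep_mser x (\<lambda>i. 0) * s_one \<gamma> + (\<Sum>j<n. if ?C j then Rep_mser x \<gamma> else 0)"
      by (simp add: Rep_mser_add Rep_mser_sum Rep_mconst s_add_def s_smult_def Rep_mvar_mult_var_quot[OF x])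
    consider "\<gamma> = (\<lambda>i. 0)" | "\<gamma> \<noteq> (\<lambda>i. 0)" "\<gamma> \<in> exps n" | "\<gamma> \<notin> exps n"
      by blast
    thus ?thesis
    proof cases
      case 1
      thus ?thesis unfolding rhs by (simp add: s_one_def)
    next
      case 2
      hence "s_one \<gamma> = (0 :: 'k)" by (auto simp: s_one_def fun_eq_iff)
      thus ?thesis unfolding rhs using sum_first_nonzero[OF 2(2,1)] by simp
    next
      case 3
      hence "Rep_mser x \<gamma> = 0" using x series_ring_vanishes[OF R] by (simp add: mcarrier_def)
      moreover have "s_one \<gamma> = (0 :: 'k)" using 3 by (auto simp: exps_def s_one_def)
      ultimately show ?thesis unfolding rhs by (simp cong: if_cong)
    qed
  qed
  thus ?thesis by (simp add: Rep_mser_inject[symmetric] fun_eq_iff)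
qed

end

definition der_defect :: "nat \<Rightarrow> ('k ser \<Rightarrow> 'k ser) \<Rightarrow> ('k::comm_ring_1) mser \<Rightarrow> 'k mser" where
  "der_defect n e x = mder e x - (\<Sum>i<n. mder e (mvar i) * mpd i x)"

context
  fixes n :: nat and R :: "('k::comm_ring_1) ser set" and e :: "'k ser \<Rightarrow> 'k ser"
  assumes R: "series_ring n R" and e: "is_kderivation R e"
begin

lemma mcarrier_der_defect: "x \<in> mcarrier R \<Longrightarrow> der_defect n e x \<in> mcarrier R"
  unfolding der_defect_def
  by (intro mcarrier_diff[OF R] mcarrier_mder[OF R e] mcarrier_sum[OF R] mcarrier_mult[OF R]
      mcarrier_mvar[OF R] mcarrier_mpd[OF R]) auto

lemma der_defect_mvar_decomposition:
  assumes x: "x \<in> mcarrier R"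
  shows "der_defect n e x = (\<Sum>j<n. mvar j * der_defect n e (var_quot j x))"
proof -
  define G where "G j = var_quot j x" for j
  have G: "G j \<in> mcarrier R" for j unfolding G_def by (rule mcarrier_var_quot[OF R x])
  have XG: "mvar j * G j \<in> mcarrier R" if "j \<in> {..<n}" for j
    using that by (simp add: mcarrier_mult[OF R] mcarrier_mvar[OF R] G)
  have x_eq: "x = mconst (Rep_mser x (\<lambda>i. 0)) + (\<Sum>j<n. mvar j * G j)"
    unfolding G_def by (rule mvar_decomposition[OF R x])
  have "mder e x = mder e (mconst (Rep_mser x (\<lambda>i. 0))) + mder e (\<Sum>j<n. mvar j * G j)"
    by (subst x_eq) (rule mder_add[OF R e mcarrier_mconst[OF R] mcarrier_sum[OF R XG]])
  also have "\<dots> = (\<Sum>j<n. mder e (mvar j * G j))"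
    using mder_sum[OF R e, of "{..<n}" "\<lambda>j. mvar j * G j"] XG by (simp add: mder_mconst[OF R e])
  also have "\<dots> = (\<Sum>j<n. mvar j * mder e (G j) + mder e (mvar j) * G j)"
    by (rule sum.cong[OF refl]) (simp add: mder_mult[OF R e] mcarrier_mvar[OF R] G)
  finally have mder_x: "mder e x = (\<Sum>j<n. mvar j * mder e (G j) + mder e (mvar j) * G j)" .
  have mpd_x: "mpd i x = (\<Sum>j<n. mvar j * mpd i (G j)) + G i" if "i < n" for i
  proof -
    have "mpd i x = (\<Sum>j<n. mvar j * mpd i (G j) + of_bool (i = j) * G j)"
      by (subst x_eq) (simp add: mpd_add mpd_mconst mpd_sum mpd_mult mpd_mvar)
    also have "\<dots> = (\<Sum>j<n. mvar j * mpd i (G j)) + G i"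
      using that by (simp add: sum.distrib)
    finally show ?thesis .
  qed
  have "(\<Sum>i<n. mder e (mvar i) * mpd i x)
      = (\<Sum>i<n. mder e (mvar i) * (\<Sum>j<n. mvar j * mpd i (G j))) + (\<Sum>i<n. mder e (mvar i) * G i)"
    by (simp add: mpd_x distrib_left sum.distrib)
  also have "(\<Sum>i<n. mder e (mvar i) * (\<Sum>j<n. mvar j * mpd i (G j)))
      = (\<Sum>j<n. mvar j * (\<Sum>i<n. mder e (mvar i) * mpd i (G j)))"
    unfolding sum_distrib_left by (subst sum.swap) (simp add: mult.left_commute)
  finally show ?thesis
    unfolding der_defect_def mder_x G_def[symmetric]
    by (simp add: sum.distrib right_diff_distrib sum_subtractf)
qed

text \<open>A derivation of \<open>k[[x]]\<close> need not be continuous a priori, but the decomposition above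
  expresses each coefficient of the defect through coefficients of strictly smaller total degree.\<close>
lemma der_defect_coeff_vanishes:
  "x \<in> mcarrier R \<Longrightarrow> (\<Sum>i<n. \<gamma> i) < k \<Longrightarrow> Rep_mser (der_defect n e x) \<gamma> = 0"
proof (induction k arbitrary: x \<gamma>)
  case 0
  thus ?case by simp
next
  case (Suc k)
  have "Rep_mser (mvar j * der_defect n e (var_quot j x)) \<gamma> = 0" if j: "j < n" for j
  proof (cases "\<gamma> j \<ge> 1")
    case True
    have "(\<Sum>i<n. (\<gamma>(j := \<gamma> j - 1)) i) < k"
      using sum_fun_upd_decrease[where \<gamma> = \<gamma>, OF j True] Suc.prems(2) by simp
    thus ?thesis
      using Suc.IH mcarrier_var_quot[OF R Suc.prems(1)] True by (simp add: Rep_mvar_mult)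
  qed (simp add: Rep_mvar_mult)
  thus ?case
    by (simp add: der_defect_mvar_decomposition[OF Suc.prems(1)] Rep_mser_sum)
qed

lemma mder_expansion:
  assumes x: "x \<in> mcarrier R"
  shows "mder e x = (\<Sum>i<n. mder e (mvar i) * mpd i x)"
proof -
  have "Rep_mser (der_defect n e x) \<gamma> = 0" for \<gamma>
  proof (cases "\<gamma> \<in> exps n")
    case True
    show ?thesis by (rule der_defect_coeff_vanishes[OF x, of \<gamma> "Suc (\<Sum>i<n. \<gamma> i)"]) simp
  next
    case False
    thus ?thesis using series_ring_vanishes[OF R] mcarrier_der_defect[OF x] by (simp add: mcarrier_def)
  qed
  hence "der_defect n e x = 0" by (simp add: Rep_mser_inject[symmetric] Rep_mser_zero s_zero_def fun_eq_iff)
  thus ?thesis by (simp add: der_defect_def)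
qed

end

section \<open>Antiderivatives and stable ideals\<close>

definition integ :: "nat \<Rightarrow> ('k::field_char_0) ser \<Rightarrow> 'k ser" where
  "integ j f = (\<lambda>\<alpha>. if \<alpha> j = 0 then 0 else f (\<alpha>(j := \<alpha> j - 1)) / of_nat (\<alpha> j))"

lemma pd_integ: "pd j (integ j f) = f"
  by (simp add: pd_def integ_def fun_eq_iff del: of_nat_Suc)

lemma pd_integ_other: "i \<noteq> j \<Longrightarrow> pd i (integ j f) = integ j (pd i f)"
  by (simp add: pd_def integ_def fun_eq_iff fun_upd_twist)

lemma integ_s_zero: "integ j s_zero = s_zero"
  by (simp add: integ_def s_zero_def fun_eq_iff)

lemma series_ring_integ:
  assumes R: "series_ring n R" and j: "j < n" and f: "f \<in> R"
  shows "integ j f \<in> R"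
proof (rule series_ring_reindex[OF R, where \<sigma> = "\<lambda>\<alpha>. \<alpha>(j := \<alpha> j - 1)", OF f])
  show "integ j f \<alpha> \<noteq> 0 \<Longrightarrow> f (\<alpha>(j := \<alpha> j - 1)) \<noteq> 0" for \<alpha>
    by (simp add: integ_def split: if_splits)
next
  fix \<alpha> :: "nat \<Rightarrow> nat" assume "\<alpha> \<notin> exps n"
  then obtain i where "i \<ge> n" "\<alpha> i \<noteq> 0" by (auto simp: exps_def)
  thus "\<alpha>(j := \<alpha> j - 1) \<notin> exps n" using j by (auto simp: exps_def)
next
  show "inj_on (\<lambda>\<alpha>. \<alpha>(j := \<alpha> j - 1)) {\<alpha>. integ j f \<alpha> \<noteq> 0}"
  proof (rule inj_onI)
    fix x y :: "nat \<Rightarrow> nat"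
    assume "x \<in> {\<alpha>. integ j f \<alpha> \<noteq> 0}" "y \<in> {\<alpha>. integ j f \<alpha> \<noteq> 0}"
    hence pos: "x j \<noteq> 0" "y j \<noteq> 0" by (auto simp: integ_def split: if_splits)
    assume "x(j := x j - 1) = y(j := y j - 1)"
    hence h: "\<And>i. (x(j := x j - 1)) i = (y(j := y j - 1)) i" by simp
    show "x = y"
    proof
      fix i show "x i = y i" using h[of i] h[of j] pos by (cases "i = j") auto
    qed
  qed
qed

lemma mpd_eq_zero_if_inverse:
  assumes "a * u = 1" "mpd j a = 0"
  shows "mpd j u = 0"
proof -
  have "a * mpd j u = 0"
    using arg_cong[OF assms(1), of "mpd j"] by (simp add: mpd_mult mpd_one assms(2))
  hence "(u * a) * mpd j u = 0" by (simp add: mult.assoc)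
  thus ?thesis using assms(1) by (simp add: mult.commute)
qed

context
  fixes n :: nat and R :: "('k::comm_ring_1) ser set"
  assumes R: "series_ring n R"
begin

lemma ideal_Rep_add: "is_ideal R I \<Longrightarrow> Rep_mser x \<in> I \<Longrightarrow> Rep_mser y \<in> I \<Longrightarrow> Rep_mser (x + y) \<in> I"
  by (simp add: is_ideal_def Rep_mser_add)

lemma ideal_Rep_mult:
  "is_ideal R I \<Longrightarrow> r \<in> mcarrier R \<Longrightarrow> Rep_mser x \<in> I \<Longrightarrow> Rep_mser (r * x) \<in> I"
  by (simp add: is_ideal_def Rep_mser_mult mcarrier_def)

lemma ideal_Rep_sum:
  assumes "is_ideal R I" "\<And>a. a \<in> A \<Longrightarrow> Rep_mser (F a) \<in> I"
  shows "Rep_mser (sum F A) \<in> I"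
  using assms(2)
proof (induction A rule: infinite_finite_induct)
  case (insert a A)
  thus ?case by (simp add: ideal_Rep_add[OF assms(1)])
qed (use assms(1) in \<open>simp_all add: is_ideal_def Rep_mser_zero\<close>)

lemma ideal_Rep_diff:
  assumes I: "is_ideal R I" and "Rep_mser x \<in> I" "Rep_mser y \<in> I"
  shows "Rep_mser (x - y) \<in> I"
proof -
  have "Rep_mser (- 1 * y) \<in> I"
    by (rule ideal_Rep_mult[OF I mcarrier_uminus[OF R mcarrier_one[OF R]] assms(3)])
  thus ?thesis using ideal_Rep_add[OF I assms(2), of "- y"] by simp
qed

lemma ideal_pd_stable_imp_der_stable:
  assumes I: "is_ideal R I" and pd: "\<And>i f. i < n \<Longrightarrow> f \<in> I \<Longrightarrow> pd i f \<in> I"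
    and e: "is_kderivation R e" and f: "f \<in> I"
  shows "e f \<in> I"
proof -
  have fR: "f \<in> R" using I f by (auto simp: is_ideal_def)
  define x where "x = Abs_mser f"
  have Rep_x: "Rep_mser x = f" unfolding x_def by (rule Rep_Abs_series_ring[OF R fR])
  have x: "x \<in> mcarrier R" using fR by (simp add: mcarrier_def Rep_x)
  have "Rep_mser (\<Sum>i<n. mder e (mvar i) * mpd i x) \<in> I"
    by (intro ideal_Rep_sum[OF I] ideal_Rep_mult[OF I] mcarrier_mder[OF R e] mcarrier_mvar[OF R])
       (auto simp: Rep_mpd Rep_x pd f)
  thus ?thesis by (simp add: mder_expansion[OF R e x, symmetric] Rep_mder[OF R e x] Rep_x)
qed

end

lemma is_ideal_principal:
  assumes R: "series_ring n R" and a: "a \<in> mcarrier R"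
  shows "is_ideal R {Rep_mser (a * g) | g. g \<in> mcarrier R}"
  unfolding is_ideal_def
proof (intro conjI ballI subsetI)
  fix f assume "f \<in> {Rep_mser (a * g) | g. g \<in> mcarrier R}"
  thus "f \<in> R" using a mcarrier_mult[OF R] by (auto simp: mcarrier_def)
next
  show "s_zero \<in> {Rep_mser (a * g) | g. g \<in> mcarrier R}"
    using mcarrier_zero[OF R] by (auto simp: Rep_mser_zero intro!: exI[of _ 0])
next
  fix f g assume "f \<in> {Rep_mser (a * g) | g. g \<in> mcarrier R}" "g \<in> {Rep_mser (a * g) | g. g \<in> mcarrier R}"
  then obtain x y where "f = Rep_mser (a * x)" "g = Rep_mser (a * y)" "x \<in> mcarrier R" "y \<in> mcarrier R"
    by blast
  thus "s_add f g \<in> {Rep_mser (a * g) | g. g \<in> mcarrier R}"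
    by (auto simp: Rep_mser_add[symmetric] distrib_left intro!: exI[of _ "x + y"] mcarrier_add[OF R])
next
  fix r f assume r: "r \<in> R" and "f \<in> {Rep_mser (a * g) | g. g \<in> mcarrier R}"
  then obtain x where x: "f = Rep_mser (a * x)" "x \<in> mcarrier R" by blast
  have "Rep_mser (Abs_mser r * (a * x)) = s_mul r f"
    by (simp add: x Rep_mser_mult Rep_Abs_series_ring[OF R r])
  hence "s_mul r f = Rep_mser (a * (Abs_mser r * x))" by (simp add: mult.left_commute)
  moreover have "Abs_mser r * x \<in> mcarrier R"
    by (rule mcarrier_mult[OF R Abs_mser_in_mcarrier[OF R r] x(2)])
  ultimately show "s_mul r f \<in> {Rep_mser (a * g) | g. g \<in> mcarrier R}" by blast
qed

lemma D_simple_stable_principal_unit: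
  assumes R: "series_ring n R" and derivs: "\<forall>d\<in>D. is_kderivation R d" and simple: "D_simple R D"
    and a: "a \<in> mcarrier R" "a \<noteq> 0"
    and stable: "\<And>e. e \<in> D \<Longrightarrow> \<exists>h\<in>mcarrier R. mder e a = a * h"
  shows "\<exists>u\<in>mcarrier R. a * u = 1"
proof -
  let ?I = "{Rep_mser (a * g) | g. g \<in> mcarrier R}"
  have "D_stable D ?I" unfolding D_stable_def
  proof (intro ballI)
    fix e f assume e: "e \<in> D" and "f \<in> ?I"
    then obtain x where x: "f = Rep_mser (a * x)" "x \<in> mcarrier R" by blast
    obtain h where h: "h \<in> mcarrier R" "mder e a = a * h" using stable[OF e] by blast
    have e': "is_kderivation R e" using derivs e by blast
    have "e f = Rep_mser (mder e (a * x))"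
      unfolding x(1) by (rule Rep_mder[OF R e' mcarrier_mult[OF R a(1) x(2)], symmetric])
    also have "mder e (a * x) = a * (mder e x + h * x)"
      by (simp add: mder_mult[OF R e' a(1) x(2)] h distrib_left mult.assoc)
    finally have "e f = Rep_mser (a * (mder e x + h * x))" .
    moreover have "mder e x + h * x \<in> mcarrier R"
      using x(2) h(1) by (intro mcarrier_add[OF R] mcarrier_mult[OF R] mcarrier_mder[OF R e'])
    ultimately show "e f \<in> ?I" by blast
  qed
  hence I: "?I = {s_zero} \<or> ?I = R"
    using simple is_ideal_principal[OF R a(1)] unfolding D_simple_def by blast
  have "Rep_mser a = Rep_mser (a * 1)" by simp
  hence a_in: "Rep_mser a \<in> ?I" using mcarrier_one[OF R] by blast
  have "Rep_mser a \<noteq> Rep_mser 0" using a(2) by (simp add: Rep_mser_inject)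
  hence "?I \<noteq> {s_zero}" using a_in by (auto simp: Rep_mser_zero)
  with I have "?I = R" by blast
  hence "s_one \<in> ?I" using series_ring_one[OF R] by simp
  then obtain u where "u \<in> mcarrier R" "Rep_mser (a * u) = Rep_mser 1"
    by (auto simp: Rep_mser_one)
  thus ?thesis by (auto simp: Rep_mser_inject)
qed

lemma sum_lessThan_split_last: "(n :: nat) \<ge> 1 \<Longrightarrow> (\<Sum>i<n. F i) = (\<Sum>i<n - 1. F i) + F (n - 1)"
  by (cases n) simp_all

lemma mvar_nonzero: "(mvar i :: 'k::comm_ring_1 mser) \<noteq> 0"
proof
  assume "(mvar i :: 'k mser) = 0"
  hence "Rep_mser (mvar i :: 'k mser) (unit_exp i) = Rep_mser (0 :: 'k mser) (unit_exp i)" by simp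
  thus False by (simp add: Rep_mvar Rep_mser_zero var_def s_zero_def)
qed

lemma mvar_mult_neq_one: "mvar i * y \<noteq> (1 :: 'k::comm_ring_1 mser)"
proof
  assume "mvar i * y = (1 :: 'k mser)"
  hence "Rep_mser (mvar i * y) (\<lambda>j. 0) = Rep_mser (1 :: 'k mser) (\<lambda>j. 0)" by simp
  thus False by (simp add: Rep_mvar_mult Rep_mser_one s_one_def)
qed

context
  fixes n :: nat and R :: "('k::field_char_0) ser set" and D :: "('k ser \<Rightarrow> 'k ser) set"
  assumes R: "series_ring n R" and n: "n \<ge> 1"
    and derivs: "\<forall>d\<in>D. is_kderivation R d"
    and commuting: "pairwise_commuting R D"
    and simple: "D_simple R D"
    and pds: "\<forall>j<n - 1. \<exists>d\<in>D. \<forall>f\<in>R. d f = pd j f"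
begin

lemma mcarrier_last_var: "mvar (n - 1) \<in> mcarrier R"
  using n by (intro mcarrier_mvar[OF R]) simp

lemma mder_commute:
  assumes e1: "e1 \<in> D" and e2: "e2 \<in> D" and x: "x \<in> mcarrier R"
  shows "mder e1 (mder e2 x) = mder e2 (mder e1 x)"
proof -
  have d1: "is_kderivation R e1" and d2: "is_kderivation R e2" using derivs e1 e2 by auto
  have "Rep_mser (mder e1 (mder e2 x)) = e1 (e2 (Rep_mser x))"
    using x by (simp add: Rep_mder[OF R d1] Rep_mder[OF R d2] mcarrier_mder[OF R d2])
  also have "\<dots> = e2 (e1 (Rep_mser x))"
    using commuting e1 e2 x by (simp add: pairwise_commuting_def mcarrier_def)
  also have "\<dots> = Rep_mser (mder e2 (mder e1 x))"
    using x by (simp add: Rep_mder[OF R d1] Rep_mder[OF R d2] mcarrier_mder[OF R d1])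
  finally show ?thesis by (simp add: Rep_mser_inject)
qed

lemma mpd_mder_last_var:
  assumes e: "e \<in> D" and j: "j < n - 1"
  shows "mpd j (mder e (mvar (n - 1))) = 0"
proof -
  obtain dj where dj: "dj \<in> D" "\<forall>f\<in>R. dj f = pd j f" using pds j by blast
  have dj': "is_kderivation R dj" and e': "is_kderivation R e" using derivs dj(1) e by auto
  have mpd_j: "mpd j y = mder dj y" if "y \<in> mcarrier R" for y
    using that dj(2) by (simp add: Rep_mser_inject[symmetric] Rep_mpd Rep_mder[OF R dj'] mcarrier_def)
  have "mpd j (mder e (mvar (n - 1))) = mder dj (mder e (mvar (n - 1)))"
    by (rule mpd_j[OF mcarrier_mder[OF R e' mcarrier_last_var]])
  also have "\<dots> = mder e (mder dj (mvar (n - 1)))"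
    by (rule mder_commute[OF dj(1) e mcarrier_last_var])
  also have "\<dots> = mder e (mpd j (mvar (n - 1)))"
    by (simp only: mpd_j[OF mcarrier_last_var])
  also have "\<dots> = 0"
    using j by (simp add: mpd_mvar mder_zero[OF R e'])
  finally show ?thesis .
qed

lemma mder_eq_last_var_mpd:
  assumes e: "e \<in> D" and y: "y \<in> mcarrier R" and y_free: "\<And>j. j < n - 1 \<Longrightarrow> mpd j y = 0"
  shows "mder e y = mder e (mvar (n - 1)) * mpd (n - 1) y"
  using derivs e mder_expansion[OF R _ y, of e] by (simp add: sum_lessThan_split_last[OF n] y_free)

lemma exists_der_last_var_unit: "\<exists>d\<in>D. \<exists>u\<in>mcarrier R. mder d (mvar (n - 1)) * u = 1"
proof (cases "\<exists>e\<in>D. mder e (mvar (n - 1)) \<noteq> 0")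
  case False
  have "\<exists>u\<in>mcarrier R. mvar (n - 1) * u = 1"
  proof (rule D_simple_stable_principal_unit[OF R derivs simple mcarrier_last_var mvar_nonzero])
    fix e assume "e \<in> D"
    thus "\<exists>h\<in>mcarrier R. mder e (mvar (n - 1)) = mvar (n - 1) * h"
      using False mcarrier_zero[OF R] by (intro bexI[of _ 0]) auto
  qed
  thus ?thesis using mvar_mult_neq_one by blast
next
  case True
  then obtain e0 where e0: "e0 \<in> D" "mder e0 (mvar (n - 1)) \<noteq> 0" by blast
  have e0': "is_kderivation R e0" using derivs e0(1) by blast
  have "\<exists>u\<in>mcarrier R. mder e0 (mvar (n - 1)) * u = 1"
  proof (rule D_simple_stable_principal_unit[OF R derivs simple _ e0(2)])
    show "mder e0 (mvar (n - 1)) \<in> mcarrier R" by (rule mcarrier_mder[OF R e0' mcarrier_last_var])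
  next
    fix e assume e: "e \<in> D"
    have e': "is_kderivation R e" using derivs e by blast
    have ex: "mder e (mvar (n - 1)) \<in> mcarrier R" by (rule mcarrier_mder[OF R e' mcarrier_last_var])
    have "mder e (mder e0 (mvar (n - 1))) = mder e0 (mder e (mvar (n - 1)))"
      by (rule mder_commute[OF e e0(1) mcarrier_last_var])
    also have "\<dots> = mder e0 (mvar (n - 1)) * mpd (n - 1) (mder e (mvar (n - 1)))"
      by (rule mder_eq_last_var_mpd[OF e0(1) ex mpd_mder_last_var[OF e]])
    finally show "\<exists>h\<in>mcarrier R. mder e (mder e0 (mvar (n - 1))) = mder e0 (mvar (n - 1)) * h"
      using mcarrier_mpd[OF R ex] by blast
  qed
  thus ?thesis using e0(1) by blast
qed

context
  fixes d u
  assumes d: "d \<in> D" and u: "u \<in> mcarrier R" and du: "mder d (mvar (n - 1)) * u = 1"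
begin

lemma exists_mder_eq_one: "\<exists>h\<in>mcarrier R. mder d h = 1"
proof -
  have last: "n - 1 < n" using n by simp
  have integ_R: "integ (n - 1) (Rep_mser u) \<in> R"
    using u by (intro series_ring_integ[OF R last]) (simp add: mcarrier_def)
  define h where "h = Abs_mser (integ (n - 1) (Rep_mser u))"
  have Rep_h: "Rep_mser h = integ (n - 1) (Rep_mser u)"
    unfolding h_def by (rule Rep_Abs_series_ring[OF R integ_R])
  have h: "h \<in> mcarrier R" using integ_R by (simp add: mcarrier_def Rep_h)
  have "mpd j h = 0" if j: "j < n - 1" for j
  proof -
    have "mpd j u = 0" by (rule mpd_eq_zero_if_inverse[OF du mpd_mder_last_var[OF d j]])
    moreover have "j \<noteq> n - 1" using j by simp
    ultimately show ?thesis
      by (simp add: Rep_mser_inject[symmetric] Rep_mpd Rep_h pd_integ_other Rep_mser_zero integ_s_zero)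
  qed
  hence "mder d h = mder d (mvar (n - 1)) * mpd (n - 1) h" by (rule mder_eq_last_var_mpd[OF d h])
  also have "mpd (n - 1) h = u"
    by (simp add: Rep_mser_inject[symmetric] Rep_mpd Rep_h pd_integ)
  finally have "mder d h = 1" by (simp only: du)
  thus ?thesis using h by blast
qed

lemma ideal_stable_pd_last:
  assumes I: "is_ideal R I" and stable_d: "\<And>f. f \<in> I \<Longrightarrow> d f \<in> I"
    and stable_pd: "\<And>j f. j < n - 1 \<Longrightarrow> f \<in> I \<Longrightarrow> pd j f \<in> I" and f: "f \<in> I"
  shows "pd (n - 1) f \<in> I"
proof -
  have d': "is_kderivation R d" using derivs d by blast
  have fR: "f \<in> R" using I f by (auto simp: is_ideal_def)
  define x where "x = Abs_mser f"
  have Rep_x: "Rep_mser x = f" unfolding x_def by (rule Rep_Abs_series_ring[OF R fR])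
  have x: "x \<in> mcarrier R" using fR by (simp add: mcarrier_def Rep_x)
  have "mder d x = (\<Sum>i<n - 1. mder d (mvar i) * mpd i x) + mder d (mvar (n - 1)) * mpd (n - 1) x"
    using mder_expansion[OF R d' x] by (simp only: sum_lessThan_split_last[OF n])
  hence "mpd (n - 1) x = u * (mder d x - (\<Sum>i<n - 1. mder d (mvar i) * mpd i x))"
    using du by (simp add: mult.assoc[symmetric] mult.commute[of u])
  moreover have "Rep_mser (mder d x - (\<Sum>i<n - 1. mder d (mvar i) * mpd i x)) \<in> I"
    by (intro ideal_Rep_diff[OF R I] ideal_Rep_sum[OF R I] ideal_Rep_mult[OF R I]
        mcarrier_mder[OF R d'] mcarrier_mvar[OF R])
       (use n in \<open>auto simp: Rep_mder[OF R d' x] Rep_mpd Rep_x stable_d stable_pd f\<close>)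
  ultimately have "Rep_mser (mpd (n - 1) x) \<in> I" using ideal_Rep_mult[OF R I u] by simp
  thus ?thesis by (simp add: Rep_mpd Rep_x)
qed

lemma D_simple_insert_pd: "D_simple R (insert d (pd ` {..<n - 1}))"
  unfolding D_simple_def
proof (intro allI impI)
  fix I assume "is_ideal R I \<and> D_stable (insert d (pd ` {..<n - 1})) I"
  hence I: "is_ideal R I" and stable_d: "\<And>f. f \<in> I \<Longrightarrow> d f \<in> I"
    and stable_pd: "\<And>j f. j < n - 1 \<Longrightarrow> f \<in> I \<Longrightarrow> pd j f \<in> I"
    by (auto simp: D_stable_def)
  have "pd i f \<in> I" if "i < n" "f \<in> I" for i f
    using that stable_pd ideal_stable_pd_last[OF I stable_d stable_pd] by (cases "i = n - 1") auto
  hence "D_stable D I"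
    using derivs ideal_pd_stable_imp_der_stable[OF R I] by (auto simp: D_stable_def)
  thus "I = {s_zero} \<or> I = R" using simple I unfolding D_simple_def by blast
qed

end

end

theorem corollary2p5:
  fixes n :: nat and R :: "('k::field_char_0) ser set"
    and D :: "('k ser \<Rightarrow> 'k ser) set"
  assumes "n \<ge> 1"
    and "R = poly_carrier n \<or> R = ps_carrier n"
    and "\<forall>d\<in>D. is_kderivation R d"
    and "pairwise_commuting R D"
    and "D_simple R D"
    and "\<forall>j<n - 1. \<exists>d\<in>D. \<forall>f\<in>R. d f = pd j f"
  shows "\<exists>d\<in>D. \<exists>fs :: nat \<Rightarrow> 'k ser.
           (\<forall>i<n. fs i \<in> R) \<and>
           d (fs (n - 1)) = s_one \<and>
           (\<forall>i<n - 1. d (fs i) = s_zero) \<and>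
           D_simple R (insert d (pd ` {..<n - 1}))"
proof -
  have R: "series_ring n R" using assms(2) by (simp add: series_ring_def)
  note hyps = R assms(1,3-6)
  obtain d u where d: "d \<in> D" and u: "u \<in> mcarrier R" "mder d (mvar (n - 1)) * u = 1"
    using exists_der_last_var_unit[OF hyps] by blast
  obtain h where h: "h \<in> mcarrier R" "mder d h = 1"
    using exists_mder_eq_one[OF hyps d u] by blast
  have d': "is_kderivation R d" using assms(3) d by blast
  have "d (Rep_mser h) = s_one"
    using Rep_mder[OF R d' h(1)] by (simp add: h(2) Rep_mser_one)
  moreover have "d s_zero = s_zero"
    using Rep_mder[OF R d' mcarrier_zero[OF R]] by (simp add: mder_zero[OF R d'] Rep_mser_zero)
  moreover have "Rep_mser h \<in> R" "s_zero \<in> R"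
    using h(1) series_ring_zero[OF R] by (simp_all add: mcarrier_def)
  ultimately show ?thesis
    using D_simple_insert_pd[OF hyps d u] d
    by (intro bexI[of _ d] exI[of _ "\<lambda>i. if i = n - 1 then Rep_mser h else s_zero"]) auto
qed

end
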